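(* Let $n\geq 2$ and let $\mathcal{G}=(\mathcal{V},\mathcal{E})$ be a directed graph on $\mathcal{V}=\{1,\ldots,n\}$ in which every node has at least one outgoing edge, with hyperlink matrix $A$, let $m\in(0,1)$, let $x^*$ be the PageRank vector, and let $Q=(1-m)A$. Let $\mathcal{V}_1,\ldots,\mathcal{V}_N$ ($1\leq N\leq n$) be a partition of $\mathcal{V}$ into nonempty groups of consecutive indices, $\mathcal{V}_1=\{1,\ldots,l_1\}$, $\mathcal{V}_2=\{l_1+1,\ldots,l_1+l_2\}$, $\ldots$, $\mathcal{V}_N=\{n-l_N+1,\ldots,n\}$, and partition $Q$ into blocks $\check{Q}_{hg}\in\mathbb{R}^{l_h\times l_g}$ ($h,g=1,\ldots,N$) accordingly; likewise write the state vectors as $x(k)=(\check{x}_1(k)^T,\ldots,\check{x}_N(k)^T)^T$ and $z(k)=(\check{z}_1(k)^T,\ldots,\check{z}_N(k)^T)^T$ with $\check{x}_h(k),\check{z}_h(k)\in\mathbb{R}^{l_h}$. Let $\{\psi(k)\}_{k\geq 0}$ be a sequence in $\{1,\ldots,N\}$ in which every group index appears infinitely many times. Consider the algorithm with $\check{x}_h(0)=\check{z}_h(0)=\frac{m}{n}\mathbf{1}_{l_h}$ for all $h$, and for $k\geq 0$ and each $h$, $$\check{x}_h(k+1)=\check{x}_h(k)+\check{Q}_{h\psi(k)}\big(I-\check{Q}_{\psi(k)\psi(k)}\big)^{-1}\check{z}_{\psi(k)}(k),$$ $$\check{z}_h(k+1)=\begin{cases}0&\text{if } h=\psi(k),\\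 \check{z}_h(k)+\check{Q}_{h\psi(k)}\big(I-\check{Q}_{\psi(k)\psi(k)}\big)^{-1}\check{z}_{\psi(k)}(k)&\text{otherwise.}\end{cases}$$ Then $x(k)\to x^*$ as $k\to\infty$. If, in addition, there is $T>0$ such that every group index appears among $\psi(k),\ldots,\psi(k+T-1)$ for every $k\geq 0$, then the convergence is exponential, i.e., there exist $C>0$ and $\rho\in(0,1)$ with $\|x(k)-x^*\|\leq C\rho^k$ for all $k\geq 0$.
   Context: Write $(i,j)\in\mathcal{E}$ if page $i$ has a link to page $j$. $\mathcal{L}_j^{\text{out}}=\{i:(j,i)\in\mathcal{E}\}$ and $n_j=|\mathcal{L}_j^{\text{out}}|\geq 1$. The hyperlink matrix $A=(a_{ij})$ is defined by $a_{ij}=1/n_j$ if $i\in\mathcal{L}_j^{\text{out}}$ and $a_{ij}=0$ otherwise (column stochastic). The PageRank vector $x^*$ satisfies $x^*=(1-m)Ax^*+\frac{m}{n}\mathbf{1}_n$ and $\mathbf{1}_n^Tx^*=1$. Each diagonal block $\check{Q}_{hh}$ is a nonnegative principal submatrix of the Schur stable matrix $Q$, so $I-\check{Q}_{hh}$ is invertible. (Pages are assumed indexed so that groups are consecutive blocks.) *)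

theory Defs
  imports "Jordan_Normal_Form.Gauss_Jordan_Elimination"
begin

text \<open>Pages are indexed 0,...,n-1; a graph is a set of pairs E, (i,j) in E meaning page i links to page j.\<close>

definition out_links :: "(nat \<times> nat) set \<Rightarrow> nat \<Rightarrow> nat set" where
  "out_links E j = {i. (j, i) \<in> E}"

definition hyperlink_mat :: "nat \<Rightarrow> (nat \<times> nat) set \<Rightarrow> real mat" where
  "hyperlink_mat n E = mat n n (\<lambda>(i, j).
     if i \<in> out_links E j then 1 / real (card (out_links E j)) else 0)"

definition is_pagerank :: "nat \<Rightarrow> (nat \<times> nat) set \<Rightarrow> real \<Rightarrow> real vec \<Rightarrow> bool" where
  "is_pagerank n E m x \<longleftrightarrow> x \<in> carrier_vec n \<and>
     x = (1 - m) \<cdot>\<^sub>m hyperlink_mat n E *\<^sub>v x + vec n (\<lambda>_. m / real n) \<and>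
     (\<Sum>i<n. x $ i) = 1"

text \<open>Groups are indexed 0,...,N-1; group h consists of the l h consecutive indices
  starting at offset off l h.\<close>

definition off :: "(nat \<Rightarrow> nat) \<Rightarrow> nat \<Rightarrow> nat" where
  "off l h = (\<Sum>g<h. l g)"

definition grp :: "(nat \<Rightarrow> nat) \<Rightarrow> nat \<Rightarrow> nat" where
  "grp l i = (LEAST h. i < off l (Suc h))"

definition blk :: "(nat \<Rightarrow> nat) \<Rightarrow> real mat \<Rightarrow> nat \<Rightarrow> nat \<Rightarrow> real mat" where
  "blk l Q h g = mat (l h) (l g) (\<lambda>(i, j). Q $$ (off l h + i, off l g + j))"

definition incr :: "(nat \<Rightarrow> nat) \<Rightarrow> real mat \<Rightarrow> nat \<Rightarrow> nat \<Rightarrow> real vec \<Rightarrow> real vec" where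
  "incr l Q h p zp = blk l Q h p *\<^sub>v
     (the (mat_inverse (1\<^sub>m (l p) - blk l Q p p)) *\<^sub>v zp)"

fun alg :: "nat \<Rightarrow> real \<Rightarrow> (nat \<Rightarrow> nat) \<Rightarrow> real mat \<Rightarrow> (nat \<Rightarrow> nat) \<Rightarrow> nat
            \<Rightarrow> (nat \<Rightarrow> real vec) \<times> (nat \<Rightarrow> real vec)" where
  "alg n m l Q \<psi> 0 = ((\<lambda>h. vec (l h) (\<lambda>_. m / real n)), (\<lambda>h. vec (l h) (\<lambda>_. m / real n)))"
| "alg n m l Q \<psi> (Suc k) =
     (let (X, Z) = alg n m l Q \<psi> k; p = \<psi> k in
      ((\<lambda>h. X h + incr l Q h p (Z p)),
       (\<lambda>h. if h = p then 0\<^sub>v (l h) else Z h + incr l Q h p (Z p))))"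

definition stack :: "nat \<Rightarrow> (nat \<Rightarrow> nat) \<Rightarrow> (nat \<Rightarrow> real vec) \<Rightarrow> real vec" where
  "stack n l X = vec n (\<lambda>i. X (grp l i) $ (i - off l (grp l i)))"

definition vnorm :: "nat \<Rightarrow> real vec \<Rightarrow> real" where
  "vnorm n v = sqrt (\<Sum>i<n. (v $ i)\<^sup>2)"

end

theory Submission
  imports Defs "Jordan_Normal_Form.Determinant" "HOL-Analysis.L2_Norm"
begin

text \<open>Let y(k) = x* - x(k) be the error and z(k) the residual. Every step preserves the invariant
  y = Q (z + y); as Q is nonnegative with column sums 1 - m, the error is nonnegative and
  m \<Sigma>y = (1 - m) \<Sigma>z. The residual mass \<Sigma>z never increases: a step removes the whole residual
  of the selected group and redistributes only the fraction 1 - m of it. A residual entry can only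
  grow until its group is selected, so over any stretch of steps in which every group is selected
  the mass shrinks by the factor 1 - m. Infinitely many such stretches drive the mass, and with it
  the error, to 0; stretches of bounded length T give the geometric rate (1 - m)^(k/T).\<close>

lemma substochastic_fixpoint_nonneg:
  fixes B :: "nat \<Rightarrow> nat \<Rightarrow> real" and u v :: "nat \<Rightarrow> real"
  assumes B_nonneg: "\<And>i j. i < d \<Longrightarrow> j < d \<Longrightarrow> 0 \<le> B i j"
    and B_colsum: "\<And>j. j < d \<Longrightarrow> (\<Sum>i<d. B i j) \<le> c" and c: "c < 1"
    and v_nonneg: "\<And>i. i < d \<Longrightarrow> 0 \<le> v i"
    and fixpoint: "\<And>i. i < d \<Longrightarrow> u i = v i + (\<Sum>j<d. B i j * u j)"
    and i: "i < d"
  shows "0 \<le> u i"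
proof -
  \<comment> \<open>The negative part of u is dominated by its own image under B, which has norm below 1.\<close>
  define a where "a j = max 0 (- u j)" for j
  have a_nonneg: "0 \<le> a j" for j
    by (simp add: a_def)
  have a_le: "a j \<le> (\<Sum>j'<d. B j j' * a j')" if j: "j < d" for j
  proof -
    have "- u j \<le> (\<Sum>j'<d. B j j' * (- u j'))"
      using fixpoint[OF j] v_nonneg[OF j] by (simp add: sum_negf)
    also have "\<dots> \<le> (\<Sum>j'<d. B j j' * a j')"
      by (intro sum_mono mult_left_mono) (auto simp: a_def B_nonneg j)
    finally show ?thesis
      using sum_nonneg[of "{..<d}" "\<lambda>j'. B j j' * a j'"] B_nonneg a_nonneg j
      by (simp add: a_def)
  qed
  have "(\<Sum>j<d. a j) \<le> (\<Sum>j<d. \<Sum>j'<d. B j j' * a j')"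
    by (intro sum_mono a_le) simp
  also have "\<dots> = (\<Sum>j'<d. (\<Sum>j<d. B j j') * a j')"
    by (subst sum.swap) (simp add: sum_distrib_right)
  also have "\<dots> \<le> (\<Sum>j'<d. c * a j')"
    by (intro sum_mono mult_right_mono) (simp_all add: B_colsum a_nonneg)
  finally have "(\<Sum>j<d. a j) \<le> c * (\<Sum>j<d. a j)"
    by (simp add: sum_distrib_left)
  then have "(1 - c) * (\<Sum>j<d. a j) \<le> 0"
    by (simp add: algebra_simps)
  then have "(\<Sum>j<d. a j) \<le> 0"
    using c by (simp add: mult_le_0_iff)
  then have "(\<Sum>j<d. a j) = 0"
    using sum_nonneg[of "{..<d}" a] a_nonneg by simp
  then have "a i = 0"
    using i a_nonneg by (simp add: sum_nonneg_eq_0_iff)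
  then show ?thesis
    by (simp add: a_def)
qed

lemma decseq_tendsto_zero_if_contracting:
  fixes s :: "nat \<Rightarrow> real"
  assumes dec: "decseq s" and nonneg: "\<And>k. 0 \<le> s k" and c: "c < 1"
    and contract: "\<And>K. \<exists>T. s (K + T) \<le> c * s K"
  shows "s \<longlonglongrightarrow> 0"
proof -
  obtain L where lim: "s \<longlonglongrightarrow> L" and L_le: "\<And>k. L \<le> s k"
    using decseq_convergent[OF dec, of 0] nonneg by blast
  have "L \<le> c * s K" for K
    using L_le contract[of K] by (meson order_trans)
  then have "L \<le> c * L"
    by (intro LIMSEQ_le_const[OF tendsto_mult_left[OF lim]]) simp
  moreover have "0 \<le> L"
    using LIMSEQ_le_const[OF lim] nonneg by blast
  ultimately have "L = 0"
    using c by (smt (verit) mult_le_cancel_right1)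
  then show ?thesis
    using lim by simp
qed

lemma decseq_exponential_if_periodically_contracting:
  fixes s :: "nat \<Rightarrow> real"
  assumes dec: "decseq s" and s0: "0 \<le> s 0" and c: "0 < c" "c < 1" and T: "0 < T"
    and contract: "\<And>K. s (K + T) \<le> c * s K"
  shows "s k \<le> s 0 / c * root T c ^ k"
proof -
  define \<rho> where "\<rho> = root T c"
  have \<rho>: "0 < \<rho>" "\<rho> < 1" "\<rho> ^ T = c"
    using T c by (simp_all add: \<rho>_def real_root_gt_zero)
  have periods: "s (j * T) \<le> c ^ j * s 0" for j
  proof (induction j)
    case (Suc j)
    have "s (Suc j * T) \<le> c * s (j * T)"
      using contract[of "j * T"] by (simp add: add.commute)
    also have "\<dots> \<le> c * (c ^ j * s 0)"
      using Suc c by simp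
    finally show ?case
      by simp
  qed simp
  have "c ^ Suc (k div T) = c ^ (k div T) * \<rho> ^ T"
    using \<rho> by simp
  also have "\<dots> \<le> c ^ (k div T) * \<rho> ^ (k mod T)"
    using \<rho> c T by (intro mult_left_mono power_decreasing) simp_all
  also have "\<dots> = \<rho> ^ k"
    using \<rho>(3) by (metis div_mult_mod_eq power_add power_mult mult.commute)
  finally have "c ^ (k div T) \<le> \<rho> ^ k / c"
    using c by (simp add: field_simps)
  have "s k \<le> s (k div T * T)"
    using dec by (rule decseqD) simp
  also have "\<dots> \<le> c ^ (k div T) * s 0"
    by (rule periods)
  also have "\<dots> \<le> \<rho> ^ k / c * s 0"
    using \<open>c ^ (k div T) \<le> \<rho> ^ k / c\<close> s0 by (rule mult_right_mono)
  finally show ?thesis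
    by (simp add: \<rho>_def mult.commute)
qed

text \<open>The algorithm, entrywise: x k is the estimate and z k the residual after k steps, sel k j
  says that coordinate j lies in the group updated at step k, and W k is the residual of that group
  pushed through (I - Q_pp)^-1 and extended by zero, so that W_sel is the equation of the block
  solve.\<close>

locale residual_iteration =
  fixes n :: nat and m :: real and q :: "nat \<Rightarrow> nat \<Rightarrow> real" and b xs :: "nat \<Rightarrow> real"
    and sel :: "nat \<Rightarrow> nat \<Rightarrow> bool" and x z W :: "nat \<Rightarrow> nat \<Rightarrow> real"
  assumes m_pos: "0 < m" and m_less_1: "m < 1"
    and q_nonneg: "\<And>i j. i < n \<Longrightarrow> j < n \<Longrightarrow> 0 \<le> q i j"
    and q_colsum: "\<And>j. j < n \<Longrightarrow> (\<Sum>i<n. q i j) = 1 - m"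
    and b_nonneg: "\<And>i. i < n \<Longrightarrow> 0 \<le> b i"
    and xs_fixpoint: "\<And>i. i < n \<Longrightarrow> xs i = (\<Sum>j<n. q i j * xs j) + b i"
    and x_0: "\<And>i. i < n \<Longrightarrow> x 0 i = b i"
    and z_0: "\<And>i. i < n \<Longrightarrow> z 0 i = b i"
    and x_Suc: "\<And>k i. i < n \<Longrightarrow> x (Suc k) i = x k i + (\<Sum>j<n. q i j * W k j)"
    and z_Suc: "\<And>k i. i < n \<Longrightarrow> z (Suc k) i = z k i + (\<Sum>j<n. q i j * W k j) - W k i"
    and W_sel: "\<And>k j. j < n \<Longrightarrow> sel k j \<Longrightarrow> W k j = z k j + (\<Sum>i<n. q j i * W k i)"
    and W_unsel: "\<And>k j. j < n \<Longrightarrow> \<not> sel k j \<Longrightarrow> W k j = 0"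
begin

lemma W_nonneg_if_z_nonneg:
  assumes z_nonneg: "\<And>i. i < n \<Longrightarrow> 0 \<le> z k i" and j: "j < n"
  shows "0 \<le> W k j"
proof (rule substochastic_fixpoint_nonneg[where B = "\<lambda>i i'. if sel k i then q i i' else 0"
      and v = "\<lambda>i. if sel k i then z k i else 0" and c = "1 - m", OF _ _ _ _ _ j])
  show "0 \<le> (if sel k i then q i j' else 0)" if "i < n" "j' < n" for i j'
    using q_nonneg that by simp
  show "(\<Sum>i<n. if sel k i then q i j' else 0) \<le> 1 - m" if "j' < n" for j'
    unfolding q_colsum[OF that, symmetric] using q_nonneg that by (intro sum_mono) simp
  show "0 \<le> (if sel k i then z k i else 0)" if "i < n" for i
    using z_nonneg that by simp
  show "W k i = (if sel k i then z k i else 0) + (\<Sum>i'<n. (if sel k i then q i i' else 0) * W k i')"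
    if "i < n" for i
    using W_sel W_unsel that by simp
qed (use m_pos in simp)

lemma z_Suc_sel: "i < n \<Longrightarrow> sel k i \<Longrightarrow> z (Suc k) i = 0"
  using z_Suc W_sel by simp

lemma z_Suc_unsel: "i < n \<Longrightarrow> \<not> sel k i \<Longrightarrow> z (Suc k) i = z k i + (\<Sum>j<n. q i j * W k j)"
  using z_Suc W_unsel by simp

lemma z_nonneg: "i < n \<Longrightarrow> 0 \<le> z k i"
proof (induction k arbitrary: i)
  case 0
  then show ?case
    using z_0 b_nonneg by simp
next
  case (Suc k)
  have "0 \<le> (\<Sum>j<n. q i j * W k j)"
    using Suc W_nonneg_if_z_nonneg q_nonneg by (intro sum_nonneg mult_nonneg_nonneg) simp_all
  then show ?case
    using Suc z_Suc_sel z_Suc_unsel by (cases "sel k i") simp_all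
qed

lemma W_nonneg: "j < n \<Longrightarrow> 0 \<le> W k j"
  using W_nonneg_if_z_nonneg z_nonneg by blast

lemma z_le_W: "j < n \<Longrightarrow> sel k j \<Longrightarrow> z k j \<le> W k j"
  using W_sel q_nonneg W_nonneg
  by (fastforce intro!: sum_nonneg)

lemma z_le_z_Suc: "i < n \<Longrightarrow> \<not> sel k i \<Longrightarrow> z k i \<le> z (Suc k) i"
  using z_Suc_unsel q_nonneg W_nonneg
  by (fastforce intro!: sum_nonneg)

lemma z_le_until_sel:
  "i < n \<Longrightarrow> (\<And>t. t < d \<Longrightarrow> \<not> sel (K + t) i) \<Longrightarrow> z K i \<le> z (K + d) i"
proof (induction d)
  case (Suc d)
  then show ?case
    using z_le_z_Suc[of i "K + d"] by simp
qed simp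

definition mass :: "nat \<Rightarrow> real" where
  "mass k = (\<Sum>i<n. z k i)"

lemma mass_nonneg: "0 \<le> mass k"
  unfolding mass_def using z_nonneg by (intro sum_nonneg) simp

lemma mass_Suc: "mass (Suc k) = mass k - m * (\<Sum>j<n. W k j)"
proof -
  have "(\<Sum>i<n. \<Sum>j<n. q i j * W k j) = (\<Sum>j<n. (1 - m) * W k j)"
    by (subst sum.swap) (simp add: q_colsum flip: sum_distrib_right)
  then show ?thesis
    unfolding mass_def
    by (simp add: z_Suc sum.distrib sum_subtractf sum_distrib_left algebra_simps)
qed

lemma decseq_mass: "decseq mass"
  using mass_Suc W_nonneg m_pos
  by (intro decseq_SucI) (auto intro!: mult_nonneg_nonneg sum_nonneg)

lemma mass_add:
  "mass (K + T) = mass K - m * (\<Sum>t<T. \<Sum>j<n. W (K + t) j)"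
  by (induction T) (simp_all add: mass_Suc algebra_simps)

lemma mass_window_contraction:
  assumes window: "\<And>j. j < n \<Longrightarrow> \<exists>t<T. sel (K + t) j"
  shows "mass (K + T) \<le> (1 - m) * mass K"
proof -
  \<comment> \<open>Before a coordinate is selected its residual can only grow, and when it is selected
    the whole residual is pushed.\<close>
  have z_le: "z K j \<le> (\<Sum>t<T. W (K + t) j)" if j: "j < n" for j
  proof -
    obtain t0 where t0: "t0 < T" "sel (K + t0) j" "\<And>t. t < t0 \<Longrightarrow> \<not> sel (K + t) j"
      using window[OF j] exists_least_iff[of "\<lambda>t. t < T \<and> sel (K + t) j"]
      by (metis order.strict_trans)
    have "z K j \<le> z (K + t0) j"
      using z_le_until_sel j t0(3) by blast
    also have "\<dots> \<le> W (K + t0) j"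
      using z_le_W j t0(2) by blast
    also have "\<dots> \<le> (\<Sum>t<T. W (K + t) j)"
      using t0(1) W_nonneg j by (intro member_le_sum) simp_all
    finally show ?thesis .
  qed
  have "mass K \<le> (\<Sum>j<n. \<Sum>t<T. W (K + t) j)"
    unfolding mass_def by (intro sum_mono z_le) simp
  then have "mass K \<le> (\<Sum>t<T. \<Sum>j<n. W (K + t) j)"
    by (simp add: sum.swap[of _ "{..<T}"])
  then show ?thesis
    using m_pos by (simp add: mass_add algebra_simps)
qed

definition err :: "nat \<Rightarrow> nat \<Rightarrow> real" where
  "err k i = xs i - x k i"

lemma err_fixpoint: "i < n \<Longrightarrow> err k i = (\<Sum>j<n. q i j * (z k j + err k j))"
proof (induction k arbitrary: i)
  case 0
  have "(\<Sum>j<n. q i j * (z 0 j + err 0 j)) = (\<Sum>j<n. q i j * xs j)"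
    using x_0 z_0 by (simp add: err_def)
  also have "\<dots> = err 0 i"
    using xs_fixpoint[OF 0] x_0[OF 0] by (simp add: err_def)
  finally show ?case
    by simp
next
  case (Suc k)
  have "z (Suc k) j + err (Suc k) j = z k j + err k j - W k j" if "j < n" for j
    using z_Suc x_Suc that by (simp add: err_def)
  then have "(\<Sum>j<n. q i j * (z (Suc k) j + err (Suc k) j))
      = (\<Sum>j<n. q i j * (z k j + err k j)) - (\<Sum>j<n. q i j * W k j)"
    by (simp add: right_diff_distrib sum_subtractf)
  moreover have "err (Suc k) i = err k i - (\<Sum>j<n. q i j * W k j)"
    using x_Suc[OF Suc.prems] by (simp add: err_def)
  ultimately show ?case
    by (simp only: Suc.IH[OF Suc.prems])
qed

lemma err_nonneg: "i < n \<Longrightarrow> 0 \<le> err k i"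
proof (rule substochastic_fixpoint_nonneg[of n q "1 - m" "\<lambda>i. \<Sum>j<n. q i j * z k j"])
  show "0 \<le> (\<Sum>j<n. q i j * z k j)" if "i < n" for i
    using q_nonneg z_nonneg that by (intro sum_nonneg mult_nonneg_nonneg) simp_all
  show "err k i = (\<Sum>j<n. q i j * z k j) + (\<Sum>j<n. q i j * err k j)" if "i < n" for i
    using err_fixpoint[OF that] by (simp add: distrib_left sum.distrib)
qed (use q_nonneg q_colsum m_pos in auto)

lemma err_sum: "m * (\<Sum>i<n. err k i) = (1 - m) * mass k"
proof -
  have "(\<Sum>i<n. err k i) = (\<Sum>i<n. \<Sum>j<n. q i j * (z k j + err k j))"
    by (rule sum.cong[OF refl]) (rule err_fixpoint, simp)
  also have "\<dots> = (\<Sum>j<n. (1 - m) * (z k j + err k j))"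
    by (subst sum.swap) (simp add: q_colsum flip: sum_distrib_right)
  also have "\<dots> = (1 - m) * mass k + (1 - m) * (\<Sum>i<n. err k i)"
    by (simp add: mass_def distrib_left sum.distrib sum_distrib_left)
  finally show ?thesis
    by (simp add: algebra_simps)
qed

lemma err_le_mass: "i < n \<Longrightarrow> err k i \<le> (1 - m) / m * mass k"
proof -
  assume i: "i < n"
  have "err k i \<le> (\<Sum>i<n. err k i)"
    using i err_nonneg by (intro member_le_sum) simp_all
  then have "m * err k i \<le> (1 - m) * mass k"
    using err_sum[of k] m_pos by (metis mult_left_mono less_imp_le)
  then show ?thesis
    using m_pos by (simp add: field_simps)
qed

theorem x_tendsto:
  assumes sel_often: "\<And>j K. j < n \<Longrightarrow> \<exists>k\<ge>K. sel k j" and i: "i < n"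
  shows "(\<lambda>k. x k i) \<longlonglongrightarrow> xs i"
proof -
  have "\<exists>T. mass (K + T) \<le> (1 - m) * mass K" for K
  proof -
    have "\<exists>t. j < n \<longrightarrow> sel (K + t) j" for j
    proof (cases "j < n")
      case True
      then obtain k where "K \<le> k" "sel k j"
        using sel_often by blast
      then show ?thesis
        by (intro exI[of _ "k - K"]) simp
    qed simp
    then obtain f where f: "\<And>j. j < n \<Longrightarrow> sel (K + f j) j"
      using choice[of "\<lambda>j t. j < n \<longrightarrow> sel (K + t) j"] by blast
    have "\<exists>t<Suc (\<Sum>j<n. f j). sel (K + t) j" if "j < n" for j
      using f[OF that] member_le_sum[of j "{..<n}" f] that by (intro exI[of _ "f j"]) simp
    then have "mass (K + Suc (\<Sum>j<n. f j)) \<le> (1 - m) * mass K"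
      by (rule mass_window_contraction)
    then show ?thesis ..
  qed
  then have "mass \<longlonglongrightarrow> 0"
    using m_pos by (intro decseq_tendsto_zero_if_contracting[OF decseq_mass mass_nonneg]) auto
  then have bound: "(\<lambda>k. (1 - m) / m * mass k) \<longlonglongrightarrow> 0"
    by (rule tendsto_mult_right_zero)
  have "(\<lambda>k. err k i) \<longlonglongrightarrow> 0"
  proof (rule real_tendsto_sandwich[OF _ _ tendsto_const bound])
    show "\<forall>\<^sub>F k in sequentially. 0 \<le> err k i"
      by (intro always_eventually allI err_nonneg i)
    show "\<forall>\<^sub>F k in sequentially. err k i \<le> (1 - m) / m * mass k"
      by (intro always_eventually allI err_le_mass i)
  qed
  then have "(\<lambda>k. xs i - err k i) \<longlonglongrightarrow> xs i - 0"
    by (intro tendsto_diff tendsto_const)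
  then show ?thesis
    by (simp add: err_def)
qed

theorem x_exponential:
  assumes T: "0 < T" and window: "\<And>K j. j < n \<Longrightarrow> \<exists>t<T. sel (K + t) j"
  shows "\<exists>\<rho>. 0 < \<rho> \<and> \<rho> < 1 \<and>
    (\<forall>k. L2_set (\<lambda>i. x k i - xs i) {..<n} \<le> (\<Sum>i<n. b i) / m * \<rho> ^ k)"
proof -
  define \<rho> where "\<rho> = root T (1 - m)"
  have \<rho>: "0 < \<rho>" "\<rho> < 1"
    using T m_pos m_less_1 by (simp_all add: \<rho>_def real_root_gt_zero)
  have contract: "mass (K + T) \<le> (1 - m) * mass K" for K
    by (rule mass_window_contraction[OF window])
  have "L2_set (\<lambda>i. x k i - xs i) {..<n} \<le> (\<Sum>i<n. b i) / m * \<rho> ^ k" for k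
  proof -
    have "L2_set (\<lambda>i. x k i - xs i) {..<n} = L2_set (err k) {..<n}"
      unfolding L2_set_def err_def by (simp add: power2_commute)
    also have "\<dots> \<le> (\<Sum>i<n. err k i)"
      using err_nonneg by (intro L2_set_le_sum) simp
    also have "\<dots> = (1 - m) / m * mass k"
      using err_sum[of k] m_pos by (simp add: field_simps)
    also have "\<dots> \<le> (1 - m) / m * (mass 0 / (1 - m) * \<rho> ^ k)"
    proof (rule mult_left_mono)
      show "mass k \<le> mass 0 / (1 - m) * \<rho> ^ k"
        unfolding \<rho>_def using m_pos m_less_1
        by (intro decseq_exponential_if_periodically_contracting
            [OF decseq_mass mass_nonneg _ _ T contract]) simp_all
    qed (use m_pos m_less_1 in simp)
    also have "\<dots> = (\<Sum>i<n. b i) / m * \<rho> ^ k"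
      using m_less_1 by (simp add: mass_def z_0)
    finally show ?thesis .
  qed
  then show ?thesis
    using \<rho> by blast
qed

end

lemma off_Suc [simp]: "off l (Suc h) = off l h + l h"
  by (simp add: off_def)

lemma off_mono: "h \<le> h' \<Longrightarrow> off l h \<le> off l h'"
  unfolding off_def by (rule sum_mono2) auto

lemma off_add_le:
  assumes "(\<Sum>h<N. l h) = n" and "p < N"
  shows "off l p + l p \<le> n"
  using off_mono[of "Suc p" N l] assms by (simp add: off_def)

lemma grp_eqI:
  assumes "off l h \<le> i" and "i < off l h + l h"
  shows "grp l i = h"
  unfolding grp_def
proof (rule Least_equality)
  show "i < off l (Suc h)"
    using assms by simp
  show "h \<le> h'" if "i < off l (Suc h')" for h'
    using that assms off_mono[of "Suc h'" h l] by (cases "h \<le> h'") auto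
qed

lemma grp_bounds:
  assumes l_sum: "(\<Sum>h<N. l h) = n" and i: "i < n"
  shows "grp l i < N" and "off l (grp l i) \<le> i" and "i < off l (grp l i) + l (grp l i)"
proof -
  have N: "0 < N"
    using l_sum i by (cases N) auto
  have "i < off l (Suc (N - 1))"
    using l_sum i N by (simp add: off_def)
  then have "i < off l (Suc (grp l i))" and "grp l i \<le> N - 1"
    unfolding grp_def by (fact LeastI, fact Least_le)
  moreover have "off l (grp l i) \<le> i"
  proof (cases "grp l i")
    case (Suc h)
    then have "\<not> i < off l (Suc h)"
      using not_less_Least[of h "\<lambda>h. i < off l (Suc h)"] by (simp add: grp_def)
    then show ?thesis
      using Suc by simp
  qed (simp add: off_def)
  ultimately show "grp l i < N" "off l (grp l i) \<le> i" "i < off l (grp l i) + l (grp l i)"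
    using N by simp_all
qed

lemma grp_eq_iff:
  assumes "(\<Sum>h<N. l h) = n" and "i < n"
  shows "grp l i = p \<longleftrightarrow> off l p \<le> i \<and> i < off l p + l p"
  using grp_bounds[OF assms] grp_eqI[of l p i] by auto

lemma grp_preimage:
  assumes l_sum: "(\<Sum>h<N. l h) = n" and p: "p < N"
  shows "{j. j < n \<and> grp l j = p} = {off l p..<off l p + l p}"
  using off_add_le[OF l_sum p] grp_eq_iff[OF l_sum, of _ p] grp_bounds[OF l_sum] by auto

lemma mult_mat_vec_index_sum:
  assumes "A \<in> carrier_mat r c" and "v \<in> carrier_vec c" and "i < r"
  shows "(A *\<^sub>v v) $ i = (\<Sum>j<c. A $$ (i, j) * v $ j)"
  using assms by (simp add: scalar_prod_def atLeast0LessThan)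

lemma one_minus_mult_mat_vec:
  fixes B :: "'a :: comm_ring_1 mat"
  assumes "B \<in> carrier_mat d d" and "v \<in> carrier_vec d"
  shows "(1\<^sub>m d - B) *\<^sub>v v = v - B *\<^sub>v v"
  using minus_mult_distrib_mat_vec[OF one_carrier_mat assms] assms(2) by simp

lemma mat_inverse_one_minus_substochastic:
  fixes B :: "real mat"
  assumes B: "B \<in> carrier_mat d d"
    and B_nonneg: "\<And>i j. i < d \<Longrightarrow> j < d \<Longrightarrow> 0 \<le> B $$ (i, j)"
    and B_colsum: "\<And>j. j < d \<Longrightarrow> (\<Sum>i<d. B $$ (i, j)) \<le> c" and c: "c < 1"
  shows "\<exists>M. mat_inverse (1\<^sub>m d - B) = Some M \<and> M \<in> carrier_mat d d \<and> (1\<^sub>m d - B) * M = 1\<^sub>m d"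
proof -
  have A: "1\<^sub>m d - B \<in> carrier_mat d d"
    using B by (rule minus_carrier_mat)
  have "det (1\<^sub>m d - B) \<noteq> 0"
  proof
    assume "det (1\<^sub>m d - B) = 0"
    then obtain v where v: "v \<in> carrier_vec d" "v \<noteq> 0\<^sub>v d" "(1\<^sub>m d - B) *\<^sub>v v = 0\<^sub>v d"
      using det_0_iff_vec_prod_zero[OF A] by blast
    have kernel: "v $ i = (B *\<^sub>v v) $ i" if "i < d" for i
      using arg_cong[OF v(3), of "\<lambda>u. u $ i"] that B v(1) by (simp add: one_minus_mult_mat_vec)
    have v_fix: "s * v $ i = 0 + (\<Sum>j<d. B $$ (i, j) * (s * v $ j))" if "i < d" for i s
    proof -
      have "v $ i = (\<Sum>j<d. B $$ (i, j) * v $ j)"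
        using kernel[OF that] mult_mat_vec_index_sum[OF B v(1) that] by (rule trans)
      then show ?thesis
        by (simp add: sum_distrib_left mult.left_commute)
    qed
    have v_nonneg: "0 \<le> s * v $ i" if "i < d" for i s
      by (rule substochastic_fixpoint_nonneg[of d "\<lambda>i j. B $$ (i, j)" c "\<lambda>_. 0" "\<lambda>i. s * v $ i",
            OF B_nonneg B_colsum c _ v_fix that]) simp_all
    have "v = 0\<^sub>v d"
    proof (rule eq_vecI)
      show "v $ i = 0\<^sub>v d $ i" if "i < dim_vec (0\<^sub>v d)" for i
        using that v_nonneg[of i 1] v_nonneg[of i "-1"] by simp
    qed (use v(1) in simp)
    with v(2) show False
      by simp
  qed
  then have "1\<^sub>m d - B \<in> Units (ring_mat TYPE(real) d ())"
    by (rule det_non_zero_imp_unit[OF A])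
  then obtain M where "mat_inverse (1\<^sub>m d - B) = Some M"
    using mat_inverse(1)[OF A] by fastforce
  then show ?thesis
    using mat_inverse(2)[OF A] by blast
qed

lemma inverse_fixpoint:
  fixes B M :: "real mat"
  assumes B: "B \<in> carrier_mat d d" and M: "M \<in> carrier_mat d d"
    and inv: "(1\<^sub>m d - B) * M = 1\<^sub>m d" and z: "z \<in> carrier_vec d"
  shows "M *\<^sub>v z = z + B *\<^sub>v (M *\<^sub>v z)"
proof -
  have A: "1\<^sub>m d - B \<in> carrier_mat d d"
    using B by (rule minus_carrier_mat)
  have "M *\<^sub>v z - B *\<^sub>v (M *\<^sub>v z) = (1\<^sub>m d - B) *\<^sub>v (M *\<^sub>v z)"
    using B M z by (simp add: one_minus_mult_mat_vec)
  also have "\<dots> = z"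
    using assoc_mult_mat_vec[OF A M z] inv z by simp
  finally have fixpoint: "M *\<^sub>v z - B *\<^sub>v (M *\<^sub>v z) = z" .
  show ?thesis
  proof (rule eq_vecI)
    fix i
    assume "i < dim_vec (z + B *\<^sub>v (M *\<^sub>v z))"
    then have i: "i < d"
      using B by simp
    have "(M *\<^sub>v z) $ i - (B *\<^sub>v (M *\<^sub>v z)) $ i = z $ i"
      using arg_cong[OF fixpoint, of "\<lambda>u. u $ i"] i B M by simp
    then show "(M *\<^sub>v z) $ i = (z + B *\<^sub>v (M *\<^sub>v z)) $ i"
      using i B z by simp
  qed (use B M z in simp)
qed

lemma hyperlink_mat_carrier: "hyperlink_mat n E \<in> carrier_mat n n"
  by (simp add: hyperlink_mat_def)

lemma hyperlink_mat_nonneg: "i < n \<Longrightarrow> j < n \<Longrightarrow> 0 \<le> hyperlink_mat n E $$ (i, j)"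
  by (simp add: hyperlink_mat_def)

lemma hyperlink_mat_colsum:
  assumes E: "E \<subseteq> {0..<n} \<times> {0..<n}" and out: "out_links E j \<noteq> {}" and j: "j < n"
  shows "(\<Sum>i<n. hyperlink_mat n E $$ (i, j)) = 1"
proof -
  let ?O = "out_links E j"
  have O: "?O \<subseteq> {..<n}"
    using E by (auto simp: out_links_def)
  then have "finite ?O"
    by (rule finite_subset) simp
  have "(\<Sum>i<n. hyperlink_mat n E $$ (i, j)) = (\<Sum>i<n. if i \<in> ?O then 1 / real (card ?O) else 0)"
    using j by (intro sum.cong) (simp_all add: hyperlink_mat_def)
  also have "\<dots> = (\<Sum>i\<in>?O. 1 / real (card ?O))"
    using O by (simp add: sum.If_cases Int_absorb1)
  also have "\<dots> = 1"
    using \<open>finite ?O\<close> out by simp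
  finally show ?thesis .
qed

lemma damped_hyperlink_mat:
  assumes E: "E \<subseteq> {0..<n} \<times> {0..<n}" and out: "\<forall>j<n. out_links E j \<noteq> {}" and m: "m \<le> 1"
  shows "(1 - m) \<cdot>\<^sub>m hyperlink_mat n E \<in> carrier_mat n n"
    and "\<And>i j. i < n \<Longrightarrow> j < n \<Longrightarrow> 0 \<le> ((1 - m) \<cdot>\<^sub>m hyperlink_mat n E) $$ (i, j)"
    and "\<And>j. j < n \<Longrightarrow> (\<Sum>i<n. ((1 - m) \<cdot>\<^sub>m hyperlink_mat n E) $$ (i, j)) = 1 - m"
proof -
  show "(1 - m) \<cdot>\<^sub>m hyperlink_mat n E \<in> carrier_mat n n"
    using hyperlink_mat_carrier by (rule smult_carrier_mat)
  have index: "((1 - m) \<cdot>\<^sub>m hyperlink_mat n E) $$ (i, j) = (1 - m) * hyperlink_mat n E $$ (i, j)"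
    if "i < n" "j < n" for i j
    using that hyperlink_mat_carrier[of n E] by simp
  show "0 \<le> ((1 - m) \<cdot>\<^sub>m hyperlink_mat n E) $$ (i, j)" if "i < n" "j < n" for i j
    using index[OF that] hyperlink_mat_nonneg[OF that] m by simp
  show "(\<Sum>i<n. ((1 - m) \<cdot>\<^sub>m hyperlink_mat n E) $$ (i, j)) = 1 - m" if j: "j < n" for j
  proof -
    have "(\<Sum>i<n. ((1 - m) \<cdot>\<^sub>m hyperlink_mat n E) $$ (i, j))
        = (1 - m) * (\<Sum>i<n. hyperlink_mat n E $$ (i, j))"
      using index j by (simp add: sum_distrib_left)
    then show ?thesis
      using hyperlink_mat_colsum[OF E _ j] out j by simp
  qed
qed

lemma is_pagerank_fixpoint:
  assumes pr: "is_pagerank n E m xstar" and i: "i < n"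
  shows "xstar $ i = (\<Sum>j<n. ((1 - m) \<cdot>\<^sub>m hyperlink_mat n E) $$ (i, j) * xstar $ j) + m / real n"
proof -
  let ?Q = "(1 - m) \<cdot>\<^sub>m hyperlink_mat n E"
  have Q: "?Q \<in> carrier_mat n n"
    using hyperlink_mat_carrier by (rule smult_carrier_mat)
  have xstar: "xstar \<in> carrier_vec n" "xstar = ?Q *\<^sub>v xstar + vec n (\<lambda>_. m / real n)"
    using pr unfolding is_pagerank_def by blast+
  have "xstar $ i = (?Q *\<^sub>v xstar + vec n (\<lambda>_. m / real n)) $ i"
    by (rule arg_cong[OF xstar(2), where f = "\<lambda>v. v $ i"])
  also have "\<dots> = (?Q *\<^sub>v xstar) $ i + m / real n"
    using i Q by simp
  also have "(?Q *\<^sub>v xstar) $ i = (\<Sum>j<n. ?Q $$ (i, j) * xstar $ j)"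
    by (rule mult_mat_vec_index_sum[OF Q xstar(1) i])
  finally show ?thesis .
qed

lemma blk_carrier: "blk l Q h p \<in> carrier_mat (l h) (l p)"
  by (simp add: blk_def)

lemma dim_blk: "dim_row (blk l Q h p) = l h" "dim_col (blk l Q h p) = l p"
  using blk_carrier by (rule carrier_matD)+

lemma blk_index: "r < l h \<Longrightarrow> c < l p \<Longrightarrow> blk l Q h p $$ (r, c) = Q $$ (off l h + r, off l p + c)"
  by (simp add: blk_def)

definition embed_block :: "(nat \<Rightarrow> nat) \<Rightarrow> nat \<Rightarrow> real vec \<Rightarrow> nat \<Rightarrow> real" where
  "embed_block l p u j = (if grp l j = p then u $ (j - off l p) else 0)"

lemma blk_mult_vec_index:
  assumes l_sum: "(\<Sum>h<N. l h) = n" and p: "p < N" and i: "i < n" and u: "u \<in> carrier_vec (l p)"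
  shows "(blk l Q (grp l i) p *\<^sub>v u) $ (i - off l (grp l i))
    = (\<Sum>j<n. Q $$ (i, j) * embed_block l p u j)"
proof -
  have r: "i - off l (grp l i) < l (grp l i)"
    and i_eq: "off l (grp l i) + (i - off l (grp l i)) = i"
    using grp_bounds[OF l_sum i] by linarith+
  have "(blk l Q (grp l i) p *\<^sub>v u) $ (i - off l (grp l i))
      = (\<Sum>c<l p. Q $$ (i, off l p + c) * u $ c)"
    using r i_eq mult_mat_vec_index_sum[OF blk_carrier[of l Q "grp l i" p] u r]
    by (simp add: blk_index)
  also have "\<dots> = (\<Sum>j\<in>{off l p..<off l p + l p}. Q $$ (i, j) * u $ (j - off l p))"
    using sum.shift_bounds_nat_ivl[of "\<lambda>j. Q $$ (i, j) * u $ (j - off l p)" 0 "off l p" "l p"]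
    by (simp add: atLeast0LessThan add.commute)
  also have "\<dots> = (\<Sum>j | j < n \<and> grp l j = p. Q $$ (i, j) * u $ (j - off l p))"
    by (simp only: grp_preimage[OF l_sum p])
  also have "\<dots> = (\<Sum>j<n. if grp l j = p then Q $$ (i, j) * u $ (j - off l p) else 0)"
    by (simp add: sum.If_cases Int_def lessThan_def conj_commute)
  also have "\<dots> = (\<Sum>j<n. Q $$ (i, j) * embed_block l p u j)"
    by (intro sum.cong) (simp_all add: embed_block_def)
  finally show ?thesis .
qed

definition block_solve :: "(nat \<Rightarrow> nat) \<Rightarrow> real mat \<Rightarrow> nat \<Rightarrow> real vec \<Rightarrow> real vec" where
  "block_solve l Q p z = the (mat_inverse (1\<^sub>m (l p) - blk l Q p p)) *\<^sub>v z"

lemma incr_block_solve: "incr l Q h p z = blk l Q h p *\<^sub>v block_solve l Q p z"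
  by (simp only: incr_def block_solve_def)

lemma incr_carrier: "incr l Q h p z \<in> carrier_vec (l h)"
  unfolding incr_block_solve
  by (rule carrier_vecI, subst dim_mult_mat_vec, rule carrier_matD(1)[OF blk_carrier])

context
  fixes Q :: "real mat" and l :: "nat \<Rightarrow> nat" and n N :: nat and c :: real
  assumes Q_nonneg: "\<And>i j. i < n \<Longrightarrow> j < n \<Longrightarrow> 0 \<le> Q $$ (i, j)"
    and Q_colsum: "\<And>j. j < n \<Longrightarrow> (\<Sum>i<n. Q $$ (i, j)) \<le> c" and c: "c < 1"
    and l_sum: "(\<Sum>h<N. l h) = n"
begin

lemma blk_diag_inverse:
  assumes p: "p < N"
  shows "the (mat_inverse (1\<^sub>m (l p) - blk l Q p p)) \<in> carrier_mat (l p) (l p)"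
    and "(1\<^sub>m (l p) - blk l Q p p) * the (mat_inverse (1\<^sub>m (l p) - blk l Q p p)) = 1\<^sub>m (l p)"
proof -
  have "\<exists>M. mat_inverse (1\<^sub>m (l p) - blk l Q p p) = Some M \<and> M \<in> carrier_mat (l p) (l p) \<and>
      (1\<^sub>m (l p) - blk l Q p p) * M = 1\<^sub>m (l p)"
  proof (rule mat_inverse_one_minus_substochastic[OF blk_carrier _ _ c])
    show "0 \<le> blk l Q p p $$ (r, j)" if "r < l p" "j < l p" for r j
      using that off_add_le[OF l_sum p] by (simp add: blk_index Q_nonneg)
    show "(\<Sum>r<l p. blk l Q p p $$ (r, j)) \<le> c" if j: "j < l p" for j
    proof -
      have "(\<Sum>r<l p. blk l Q p p $$ (r, j)) = (\<Sum>i\<in>(+) (off l p) ` {..<l p}. Q $$ (i, off l p + j))"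
        using j by (simp add: sum.reindex blk_index)
      also have "\<dots> \<le> (\<Sum>i<n. Q $$ (i, off l p + j))"
        using off_add_le[OF l_sum p] Q_nonneg j by (intro sum_mono2) auto
      also have "\<dots> \<le> c"
        using off_add_le[OF l_sum p] j by (intro Q_colsum) simp
      finally show ?thesis .
    qed
  qed
  then show "the (mat_inverse (1\<^sub>m (l p) - blk l Q p p)) \<in> carrier_mat (l p) (l p)"
    and "(1\<^sub>m (l p) - blk l Q p p) * the (mat_inverse (1\<^sub>m (l p) - blk l Q p p)) = 1\<^sub>m (l p)"
    by auto
qed

lemma block_solve_carrier:
  "p < N \<Longrightarrow> z \<in> carrier_vec (l p) \<Longrightarrow> block_solve l Q p z \<in> carrier_vec (l p)"
  unfolding block_solve_def by (rule mult_mat_vec_carrier[OF blk_diag_inverse(1)])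

lemma incr_index:
  assumes "p < N" and "z \<in> carrier_vec (l p)" and "i < n"
  shows "incr l Q (grp l i) p z $ (i - off l (grp l i))
    = (\<Sum>j<n. Q $$ (i, j) * embed_block l p (block_solve l Q p z) j)"
  unfolding incr_block_solve using assms by (intro blk_mult_vec_index[OF l_sum] block_solve_carrier)

lemma embed_block_solve:
  assumes p: "p < N" and z: "z \<in> carrier_vec (l p)" and i: "i < n" and grp_i: "grp l i = p"
  shows "embed_block l p (block_solve l Q p z) i
    = z $ (i - off l p) + (\<Sum>j<n. Q $$ (i, j) * embed_block l p (block_solve l Q p z) j)"
proof -
  let ?w = "block_solve l Q p z" and ?r = "i - off l p"
  have r: "?r < l p"
    using grp_bounds[OF l_sum i] grp_i by simp
  have "?w = z + blk l Q p p *\<^sub>v ?w"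
    unfolding block_solve_def by (rule inverse_fixpoint[OF blk_carrier blk_diag_inverse[OF p] z])
  then have "?w $ ?r = z $ ?r + (blk l Q p p *\<^sub>v ?w) $ ?r"
    using r by (metis index_add_vec(1) dim_mult_mat_vec dim_blk(1))
  also have "(blk l Q p p *\<^sub>v ?w) $ ?r = (\<Sum>j<n. Q $$ (i, j) * embed_block l p ?w j)"
    using incr_index[OF p z i] grp_i by (simp add: incr_block_solve)
  finally show ?thesis
    using grp_i by (simp add: embed_block_def)
qed

end

lemma alg_Suc:
  "fst (alg n m l Q \<psi> (Suc k)) h
    = fst (alg n m l Q \<psi> k) h + incr l Q h (\<psi> k) (snd (alg n m l Q \<psi> k) (\<psi> k))"
  "snd (alg n m l Q \<psi> (Suc k)) h = (if h = \<psi> k then 0\<^sub>v (l h)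
     else snd (alg n m l Q \<psi> k) h + incr l Q h (\<psi> k) (snd (alg n m l Q \<psi> k) (\<psi> k)))"
  by (simp_all add: Let_def case_prod_beta)

lemma alg_carrier:
  "fst (alg n m l Q \<psi> k) h \<in> carrier_vec (l h)" "snd (alg n m l Q \<psi> k) h \<in> carrier_vec (l h)"
  by (induction k arbitrary: h) (simp_all add: alg_Suc incr_carrier del: alg.simps(2))

lemma stack_index: "i < n \<Longrightarrow> stack n l X $ i = X (grp l i) $ (i - off l (grp l i))"
  by (simp add: stack_def)

lemma alg_residual_iteration:
  fixes Q :: "real mat"
  assumes Q_nonneg: "\<And>i j. i < n \<Longrightarrow> j < n \<Longrightarrow> 0 \<le> Q $$ (i, j)"
    and Q_colsum: "\<And>j. j < n \<Longrightarrow> (\<Sum>i<n. Q $$ (i, j)) = 1 - m"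
    and m: "0 < m" "m < 1"
    and l_sum: "(\<Sum>h<N. l h) = n" and \<psi>: "\<And>k. \<psi> k < N"
    and xs: "\<And>i. i < n \<Longrightarrow> xs i = (\<Sum>j<n. Q $$ (i, j) * xs j) + m / real n"
  shows "\<exists>W. residual_iteration n m (\<lambda>i j. Q $$ (i, j)) (\<lambda>_. m / real n) xs (\<lambda>k j. grp l j = \<psi> k)
    (\<lambda>k i. stack n l (fst (alg n m l Q \<psi> k)) $ i) (\<lambda>k i. stack n l (snd (alg n m l Q \<psi> k)) $ i) W"
proof -
  define Z where "Z k = snd (alg n m l Q \<psi> k)" for k
  define W where "W k = embed_block l (\<psi> k) (block_solve l Q (\<psi> k) (Z k (\<psi> k)))" for k
  have Q_colsum_le: "(\<Sum>i<n. Q $$ (i, j)) \<le> 1 - m" if "j < n" for j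
    using Q_colsum[OF that] by simp
  have block: "1 - m < 1" "\<psi> k < N" "Z k (\<psi> k) \<in> carrier_vec (l (\<psi> k))" for k
    using m \<psi> alg_carrier by (simp_all add: Z_def)
  have incr_W: "incr l Q (grp l i) (\<psi> k) (Z k (\<psi> k)) $ (i - off l (grp l i))
      = (\<Sum>j<n. Q $$ (i, j) * W k j)"
    if "i < n" for i k
    unfolding W_def
    by (rule incr_index[OF Q_nonneg Q_colsum_le block(1) l_sum block(2,3) that])
  have W_sel: "W k i = Z k (\<psi> k) $ (i - off l (\<psi> k)) + (\<Sum>j<n. Q $$ (i, j) * W k j)"
    if "i < n" and "grp l i = \<psi> k" for i k
    unfolding W_def
    by (rule embed_block_solve[OF Q_nonneg Q_colsum_le block(1) l_sum block(2,3) that])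
  have r: "i - off l (grp l i) < l (grp l i)" if "i < n" for i
    using grp_bounds[OF l_sum that] by linarith
  show ?thesis
  proof (intro exI[of _ W] residual_iteration.intro)
    fix k i
    assume i: "i < n"
    show "stack n l (fst (alg n m l Q \<psi> 0)) $ i = m / real n"
      "stack n l (snd (alg n m l Q \<psi> 0)) $ i = m / real n"
      using r[OF i] i by (simp_all add: stack_index)
    show "stack n l (fst (alg n m l Q \<psi> (Suc k))) $ i
        = stack n l (fst (alg n m l Q \<psi> k)) $ i + (\<Sum>j<n. Q $$ (i, j) * W k j)"
      using i r[OF i] incr_W[OF i] carrier_vecD[OF incr_carrier]
      by (simp add: stack_index alg_Suc Z_def del: alg.simps(2))
    show "stack n l (snd (alg n m l Q \<psi> (Suc k))) $ i
        = stack n l (snd (alg n m l Q \<psi> k)) $ i + (\<Sum>j<n. Q $$ (i, j) * W k j) - W k i"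
    proof (cases "grp l i = \<psi> k")
      case True
      then show ?thesis
        using i r[OF i] W_sel[OF i True] by (simp add: stack_index alg_Suc Z_def del: alg.simps(2))
    next
      case False
      then have "W k i = 0"
        by (simp add: W_def embed_block_def)
      then show ?thesis
        using False i r[OF i] incr_W[OF i] carrier_vecD[OF incr_carrier]
        by (simp add: stack_index alg_Suc Z_def del: alg.simps(2))
    qed
  next
    fix k j
    assume j: "j < n" and sel: "grp l j = \<psi> k"
    show "W k j = stack n l (snd (alg n m l Q \<psi> k)) $ j + (\<Sum>i<n. Q $$ (j, i) * W k i)"
      using W_sel[OF j sel] sel j by (simp add: stack_index Z_def)
  next
    show "xs i = (\<Sum>j<n. Q $$ (i, j) * xs j) + m / real n" if "i < n" for i
      using that by (rule xs)
  qed (use m Q_nonneg Q_colsum in \<open>simp_all add: W_def embed_block_def\<close>)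
qed

lemma vnorm_diff:
  assumes "v \<in> carrier_vec n" and "w \<in> carrier_vec n"
  shows "vnorm n (v - w) = L2_set (\<lambda>i. v $ i - w $ i) {..<n}"
  using assms by (simp add: vnorm_def L2_set_def)

lemma grp_selected_infinitely_often:
  assumes l_sum: "(\<Sum>h<N. l h) = n" and often: "\<forall>h<N. \<forall>K. \<exists>k\<ge>K. \<psi> k = h" and j: "j < n"
  shows "\<exists>k\<ge>K. grp l j = \<psi> k"
proof -
  obtain k where "K \<le> k" "\<psi> k = grp l j"
    using often grp_bounds(1)[OF l_sum j] by blast
  then show ?thesis
    by auto
qed

lemma grp_selected_within:
  assumes l_sum: "(\<Sum>h<N. l h) = n" and window: "\<forall>h<N. \<exists>t<T. \<psi> (K + t) = h" and j: "j < n"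
  shows "\<exists>t<T. grp l j = \<psi> (K + t)"
proof -
  obtain t where "t < T" "\<psi> (K + t) = grp l j"
    using window grp_bounds(1)[OF l_sum j] by blast
  then show ?thesis
    by auto
qed

theorem proposition2:
  fixes n N :: nat and E :: "(nat \<times> nat) set" and m :: real and xstar :: "real vec"
    and l :: "nat \<Rightarrow> nat" and \<psi> :: "nat \<Rightarrow> nat"
  assumes n2: "n \<ge> 2"
    and E_nodes: "E \<subseteq> {0..<n} \<times> {0..<n}"
    and out: "\<forall>j<n. out_links E j \<noteq> {}"
    and m01: "0 < m" "m < 1"
    and pr: "is_pagerank n E m xstar"
    and N: "1 \<le> N" "N \<le> n"
    and l_pos: "\<forall>h<N. 1 \<le> l h"
    and l_sum: "(\<Sum>h<N. l h) = n"
    and psi_range: "\<forall>k. \<psi> k < N"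
    and psi_inf: "\<forall>h<N. \<forall>K. \<exists>k\<ge>K. \<psi> k = h"
  defines "Q \<equiv> (1 - m) \<cdot>\<^sub>m hyperlink_mat n E"
  defines "x \<equiv> (\<lambda>k. stack n l (fst (alg n m l Q \<psi> k)))"
  shows "(\<forall>i<n. (\<lambda>k. x k $ i) \<longlonglongrightarrow> xstar $ i) \<and>
         ((\<exists>T>0. \<forall>k. \<forall>h<N. \<exists>t<T. \<psi> (k + t) = h) \<longrightarrow>
           (\<exists>C>0. \<exists>\<rho>. 0 < \<rho> \<and> \<rho> < 1 \<and> (\<forall>k. vnorm n (x k - xstar) \<le> C * \<rho> ^ k)))"
proof -
  note Q = damped_hyperlink_mat[OF E_nodes out less_imp_le[OF m01(2)], folded Q_def]
  note xstar_fixpoint = is_pagerank_fixpoint[OF pr, folded Q_def]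
  obtain W where "residual_iteration n m (\<lambda>i j. Q $$ (i, j)) (\<lambda>_. m / real n) (\<lambda>i. xstar $ i)
      (\<lambda>k j. grp l j = \<psi> k) (\<lambda>k i. x k $ i) (\<lambda>k i. stack n l (snd (alg n m l Q \<psi> k)) $ i) W"
    using alg_residual_iteration[OF Q(2,3) m01 l_sum _ xstar_fixpoint] psi_range
    unfolding x_def by blast
  then interpret residual_iteration n m "\<lambda>i j. Q $$ (i, j)" "\<lambda>_. m / real n" "\<lambda>i. xstar $ i"
    "\<lambda>k j. grp l j = \<psi> k" "\<lambda>k i. x k $ i" "\<lambda>k i. stack n l (snd (alg n m l Q \<psi> k)) $ i" W .
  have "(\<lambda>k. x k $ i) \<longlonglongrightarrow> xstar $ i" if "i < n" for i
    using x_tendsto[OF grp_selected_infinitely_often[OF l_sum psi_inf] that] .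
  moreover have "\<exists>C>0. \<exists>\<rho>. 0 < \<rho> \<and> \<rho> < 1 \<and> (\<forall>k. vnorm n (x k - xstar) \<le> C * \<rho> ^ k)"
    if bounded_gaps: "\<exists>T>0. \<forall>k. \<forall>h<N. \<exists>t<T. \<psi> (k + t) = h"
  proof -
    obtain T where T: "0 < T" "\<And>K. \<forall>h<N. \<exists>t<T. \<psi> (K + t) = h"
      using bounded_gaps by blast
    obtain \<rho> where \<rho>: "0 < \<rho>" "\<rho> < 1"
      and bound: "\<And>k. L2_set (\<lambda>i. x k $ i - xstar $ i) {..<n} \<le> (\<Sum>i<n. m / real n) / m * \<rho> ^ k"
      using x_exponential[OF T(1) grp_selected_within[OF l_sum T(2)]] by blast
    have "vnorm n (x k - xstar) \<le> 1 * \<rho> ^ k" for k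
    proof -
      have "x k \<in> carrier_vec n" "xstar \<in> carrier_vec n"
        using pr by (simp_all add: x_def stack_def is_pagerank_def)
      then show ?thesis
        using bound[of k] n2 m01 by (simp add: vnorm_diff)
    qed
    then show ?thesis
      using \<rho> by (intro exI[of _ 1] exI[of _ \<rho>] conjI allI) simp_all
  qed
  ultimately show ?thesis
    by blast
qed

end
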